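(* Let $a,w,x,y$ be real sequences satisfying the ARMA relation $a*y=w*x$, and let $\mathcal{L}$ be a differentiable scalar function of $y$ with gradient $\nabla y=\partial\mathcal{L}/\partial y$. Regard $y$ as a function of $(a,w,x)$ determined by this relation, and let $\nabla x,\nabla w,\nabla a$ be the gradients of $\mathcal{L}(y(a,w,x))$ with respect to $x,w,a$. Then $$\bar a*\nabla x=\bar w*\nabla y,\qquad -\,\bar a*\nabla a=\bar y*\nabla y,\qquad \bar a*\nabla w=\bar x*\nabla y,$$ where $\bar a,\bar w,\bar y,\bar x$ denote the reversed sequences ($\bar a_i=a_{-i}$, etc.).
   Context: Convolution is $(u*v)_i=\sum_p u_p v_{i-p}$. The sequences are either (i) indexed by $\mathbb{Z}$, with $a$ having a convolution inverse $a^{-1}$ (i.e. $a*a^{-1}=a^{-1}*a=\delta$, where $\delta_0=1$ and $\delta_i=0$ for $i\neq0$) and all series involved absolutely convergent, the gradients being given by the chain rule, e.g. $\nabla w_r=\sum_i(\partial y_i/\partial w_r)\nabla y_i$; or (ii) periodic with period $N$ and convolution circular, with the discrete Fourier transform of $a$ nonzero at every frequency. *)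

theory Defs
  imports "HOL-Analysis.Analysis"
begin

definition zconv :: "(int \<Rightarrow> real) \<Rightarrow> (int \<Rightarrow> real) \<Rightarrow> int \<Rightarrow> real" where
  "zconv u v i = infsum (\<lambda>p. u p * v (i - p)) UNIV"

definition zdelta :: "int \<Rightarrow> real" where
  "zdelta i = (if i = 0 then 1 else 0)"

definition rev_seq :: "(int \<Rightarrow> real) \<Rightarrow> int \<Rightarrow> real" where
  "rev_seq u i = u (- i)"

definition zarma_sol :: "(int \<Rightarrow> real) \<Rightarrow> (int \<Rightarrow> real) \<Rightarrow> (int \<Rightarrow> real) \<Rightarrow> int \<Rightarrow> real" where
  "zarma_sol a w x = (THE y. y summable_on UNIV \<and> zconv a y = zconv w x)"

definition zpartial :: "((int \<Rightarrow> real) \<Rightarrow> int \<Rightarrow> real) \<Rightarrow> (int \<Rightarrow> real) \<Rightarrow> int \<Rightarrow> int \<Rightarrow> real" where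
  "zpartial F u r i = deriv (\<lambda>t. F (\<lambda>j. u j + t * zdelta (j - r)) i) 0"

definition zchain_grad :: "((int \<Rightarrow> real) \<Rightarrow> int \<Rightarrow> real) \<Rightarrow> (int \<Rightarrow> real) \<Rightarrow> (int \<Rightarrow> real) \<Rightarrow> int \<Rightarrow> real" where
  "zchain_grad F u gy r = infsum (\<lambda>i. zpartial F u r i * gy i) UNIV"

section \<open>Case (ii): N-periodic sequences, indexed by a finite cyclic ring Z/N\<close>

definition cconv :: "real^('n::{finite,comm_ring_1}) \<Rightarrow> real^('n::{finite,comm_ring_1}) \<Rightarrow> real^('n::{finite,comm_ring_1})" where
  "cconv u v = (\<chi> i. \<Sum>p\<in>UNIV. u $ p * v $ (i - p))"

definition crev :: "real^('n::{finite,comm_ring_1}) \<Rightarrow> real^('n::{finite,comm_ring_1})" where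
  "crev u = (\<chi> i. u $ (- i))"

definition cdft :: "real^('n::{finite,comm_ring_1}) \<Rightarrow> nat \<Rightarrow> complex" where
  "cdft a k = (\<Sum>j<CARD('n). complex_of_real (a $ of_nat j)
                 * cis (- 2 * pi * real j * real k / real CARD('n)))"

definition carma_sol :: "real^('n::{finite,comm_ring_1}) \<Rightarrow> real^('n::{finite,comm_ring_1}) \<Rightarrow> real^('n::{finite,comm_ring_1}) \<Rightarrow> real^('n::{finite,comm_ring_1})" where
  "carma_sol a w x = (THE y. cconv a y = cconv w x)"

end

theory Submission
  imports Defs "HOL-Number_Theory.Cong"
begin

text \<open>Let \<open>b\<close> be the convolution inverse of \<open>a\<close>, so that \<open>y = b * w * x\<close>.
  Perturbing \<open>x\<^sub>r\<close> by \<open>t\<close> moves \<open>y\<close> by \<open>t\<close> times \<open>b * w\<close> shifted by \<open>r\<close>, so the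
  chain-rule gradient is a correlation with \<open>\<nabla>y\<close>, i.e. \<open>\<nabla>x = rev (b * w) * \<nabla>y\<close>;
  the case of \<open>w\<close> is symmetric because \<open>w * x = x * w\<close>.  Perturbing \<open>a\<^sub>r\<close> by \<open>t\<close>
  factors the coefficient as \<open>a * (\<delta> + t c)\<close> with \<open>c\<close> the \<open>r\<close>-shift of \<open>b\<close>; a Neumann
  series inverts the second factor for small \<open>t\<close>, and the perturbed solution \<open>y\<^sub>t\<close>,
  which satisfies \<open>y\<^sub>t + t c * y\<^sub>t = y\<close>, equals \<open>y - t c * y + O(t\<^sup>2)\<close>.  Hence
  \<open>\<nabla>a = - rev (b * y) * \<nabla>y\<close>.  As reversal is multiplicative for convolution,
  \<open>rev a * rev (b * v) = rev v\<close>, which gives the three identities.  The periodic case is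
  the same computation with Frechet derivatives; there \<open>a\<close> is invertible because the
  discrete Fourier transform turns circular convolution into pointwise multiplication.\<close>

lemma infsum_nat_split_first:
  fixes g :: "nat \<Rightarrow> 'a::banach"
  assumes "g summable_on UNIV"
  shows "(\<Sum>\<^sub>\<infinity>n. g n) = g 0 + (\<Sum>\<^sub>\<infinity>n. g (Suc n))"
proof -
  have UNIV_eq: "UNIV = insert 0 (range Suc)"
    using not0_implies_Suc by auto
  have "g summable_on range Suc"
    using assms by (rule summable_on_subset_banach) simp
  then have "(\<Sum>\<^sub>\<infinity>n. g n) = g 0 + infsum g (range Suc)"
    by (subst UNIV_eq, subst infsum_insert) auto
  also have "infsum g (range Suc) = (\<Sum>\<^sub>\<infinity>n. g (Suc n))"
    by (simp add: infsum_reindex o_def)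
  finally show ?thesis .
qed

lemma summable_on_abs_iff_real:
  fixes f :: "'a \<Rightarrow> real"
  shows "(\<lambda>x. \<bar>f x\<bar>) summable_on A \<longleftrightarrow> f summable_on A"
  using summable_on_iff_abs_summable_on_real[of f A] by (simp add: real_norm_def)

lemma summable_on_comparison_abs:
  fixes f g :: "'a \<Rightarrow> real"
  assumes "g summable_on A" "\<And>x. x \<in> A \<Longrightarrow> \<bar>f x\<bar> \<le> \<bar>g x\<bar>"
  shows "f summable_on A"
proof -
  have "(\<lambda>x. norm (f x)) summable_on A"
    by (rule Infinite_Sum.abs_summable_on_comparison_test[of g])
      (use assms in \<open>simp_all add: real_norm_def summable_on_abs_iff_real\<close>)
  then show ?thesis
    by (rule summable_on_iff_abs_summable_on_real[THEN iffD2])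
qed

lemma summable_on_mult_bounded:
  fixes u g :: "'a \<Rightarrow> real"
  assumes "u summable_on A" "\<And>x. x \<in> A \<Longrightarrow> \<bar>g x\<bar> \<le> M"
  shows "(\<lambda>x. u x * g x) summable_on A"
proof (rule summable_on_comparison_abs)
  show "(\<lambda>x. u x * M) summable_on A"
    using assms(1) by (rule summable_on_cmult_left)
  show "\<bar>u x * g x\<bar> \<le> \<bar>u x * M\<bar>" if "x \<in> A" for x
  proof -
    have "\<bar>g x\<bar> \<le> \<bar>M\<bar>" using assms(2)[OF that] by linarith
    then show ?thesis unfolding abs_mult by (rule mult_left_mono) simp
  qed
qed

lemma has_derivative_at_quadratic_remainder:
  fixes f :: "'a::real_normed_vector \<Rightarrow> 'b::real_normed_vector"
  assumes L: "bounded_linear L" and \<delta>: "0 < \<delta>"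
    and remainder: "\<And>h. norm h < \<delta> \<Longrightarrow> norm (f (x + h) - f x - L h) \<le> M * norm h ^ 2"
  shows "(f has_derivative L) (at x)"
  unfolding has_derivative_at_alt
proof (intro conjI allI impI L)
  fix e :: real assume e: "0 < e"
  define d where "d = min \<delta> (e / (\<bar>M\<bar> + 1))"
  have d: "0 < d" using \<delta> e by (simp add: d_def)
  have "norm (f y - f x - L (y - x)) \<le> e * norm (y - x)" if y: "norm (y - x) < d" for y
  proof -
    have "\<bar>M\<bar> * norm (y - x) \<le> e"
    proof -
      have "(\<bar>M\<bar> + 1) * norm (y - x) \<le> e"
        using y by (simp add: d_def field_simps)
      moreover have "(\<bar>M\<bar> + 1) * norm (y - x) = \<bar>M\<bar> * norm (y - x) + norm (y - x)"
        by (simp add: algebra_simps)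
      ultimately show ?thesis
        using norm_ge_zero[of "y - x"] by linarith
    qed
    have "M * norm (y - x) ^ 2 \<le> \<bar>M\<bar> * norm (y - x) ^ 2"
      by (rule mult_right_mono) auto
    also have "\<dots> = (\<bar>M\<bar> * norm (y - x)) * norm (y - x)"
      by (simp add: power2_eq_square)
    also have "\<dots> \<le> e * norm (y - x)"
      using \<open>\<bar>M\<bar> * norm (y - x) \<le> e\<close> by (rule mult_right_mono) simp
    finally have "M * norm (y - x) ^ 2 \<le> e * norm (y - x)" .
    moreover have "norm (f y - f x - L (y - x)) \<le> M * norm (y - x) ^ 2"
      using remainder[of "y - x"] y by (simp add: d_def)
    ultimately show ?thesis by linarith
  qed
  then show "\<exists>d>0. \<forall>y. norm (y - x) < d \<longrightarrow> norm (f y - f x - L (y - x)) \<le> e * norm (y - x)"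
    using d by blast
qed

lemma linear_neumann_remainder_le:
  fixes T :: "'a::real_normed_vector \<Rightarrow> 'a"
  assumes T: "linear T" and bound: "\<And>v. norm (T v) \<le> q * norm v"
    and q: "0 \<le> q" "q \<le> 1 / 2"
    and y_eq: "z + T z = y"
  shows "norm (z - y + T y) \<le> 2 * q ^ 2 * norm y"
proof -
  have "z = y - T z"
    using y_eq by (simp only: eq_diff_eq)
  then have "norm z \<le> norm y + norm (T z)"
    using norm_triangle_ineq4[of y "T z"] by simp
  also have "\<dots> \<le> norm y + 1 / 2 * norm z"
    using bound[of z] mult_right_mono[OF q(2) norm_ge_zero[of z]] by linarith
  finally have z_le: "norm z \<le> 2 * norm y" by simp
  have "z - y + T y = T (T z)"
    using y_eq linear_add[OF T, of z "T z"] by (auto simp: algebra_simps)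
  then have "norm (z - y + T y) \<le> q * (q * norm z)"
    using order_trans[OF bound[of "T z"] mult_left_mono[OF bound[of z] q(1)]] by simp
  also have "\<dots> \<le> q * (q * (2 * norm y))"
    using z_le q(1) by (intro mult_left_mono) auto
  finally show ?thesis
    by (simp add: power2_eq_square algebra_simps)
qed

section \<open>Absolutely summable sequences on the integers\<close>

definition l1_norm :: "('a \<Rightarrow> real) \<Rightarrow> real" where
  "l1_norm u = (\<Sum>\<^sub>\<infinity>p. \<bar>u p\<bar>)" \<comment> \<open>junk value \<open>0\<close> unless \<open>u\<close> is summable\<close>

definition zshift :: "int \<Rightarrow> (int \<Rightarrow> real) \<Rightarrow> int \<Rightarrow> real" where
  "zshift r u i = u (i - r)"

lemma l1_norm_nonneg: "0 \<le> l1_norm u"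
  unfolding l1_norm_def by (rule infsum_nonneg) simp

lemma abs_le_l1_norm:
  assumes "u summable_on UNIV"
  shows "\<bar>u i\<bar> \<le> l1_norm u"
proof -
  have "(\<Sum>\<^sub>\<infinity>p\<in>{i}. \<bar>u p\<bar>) \<le> (\<Sum>\<^sub>\<infinity>p. \<bar>u p\<bar>)"
    using assms by (intro infsum_mono_neutral) (auto simp: summable_on_abs_iff_real)
  then show ?thesis by (simp add: l1_norm_def)
qed

lemma l1_norm_cmult: "l1_norm (\<lambda>i. t * u i) = \<bar>t\<bar> * l1_norm u"
  unfolding l1_norm_def by (simp add: abs_mult infsum_cmult_right')

lemma l1_norm_add_le:
  assumes u: "u summable_on UNIV" and v: "v summable_on UNIV"
  shows "l1_norm (\<lambda>i. u i + v i) \<le> l1_norm u + l1_norm v"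
proof -
  have au: "(\<lambda>i. \<bar>u i\<bar>) summable_on UNIV" and av: "(\<lambda>i. \<bar>v i\<bar>) summable_on UNIV"
    using u v by (simp_all add: summable_on_abs_iff_real)
  have "(\<lambda>i. \<bar>u i + v i\<bar>) summable_on UNIV"
    using summable_on_add[OF u v] by (simp add: summable_on_abs_iff_real)
  then have "l1_norm (\<lambda>i. u i + v i) \<le> (\<Sum>\<^sub>\<infinity>i. \<bar>u i\<bar> + \<bar>v i\<bar>)"
    unfolding l1_norm_def by (rule infsum_mono[OF _ summable_on_add[OF au av]]) (rule abs_triangle_ineq)
  also have "\<dots> = l1_norm u + l1_norm v"
    unfolding l1_norm_def by (rule infsum_add[OF au av])
  finally show ?thesis .
qed

lemma summable_on_product_real:
  fixes u :: "'a \<Rightarrow> real" and v :: "'b \<Rightarrow> real"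
  assumes u: "u summable_on UNIV" and v: "v summable_on UNIV"
  shows "(\<lambda>(p, q). u p * v q) summable_on UNIV"
proof -
  have "(\<lambda>pq. norm (case pq of (p, q) \<Rightarrow> u p * v q)) summable_on UNIV \<times> UNIV"
  proof (rule Infinite_Sum.abs_summable_on_Sigma_iff[THEN iffD2], intro conjI ballI)
    show "(\<lambda>q. norm (case (p, q) of (p, q) \<Rightarrow> u p * v q)) summable_on UNIV" for p
      using v by (simp add: real_norm_def abs_mult summable_on_cmult_right summable_on_abs_iff_real)
    have "(\<lambda>p. \<bar>u p\<bar> * l1_norm v) summable_on UNIV"
      using u by (simp add: summable_on_cmult_left summable_on_abs_iff_real)
    then show "(\<lambda>p. norm (\<Sum>\<^sub>\<infinity>q. norm (case (p, q) of (p, q) \<Rightarrow> u p * v q))) summable_on UNIV"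
      by (simp add: real_norm_def abs_mult infsum_cmult_right' l1_norm_def infsum_nonneg)
  qed
  then show ?thesis
    by (simp add: summable_on_iff_abs_summable_on_real[of "\<lambda>(p, q). u p * v q"])
qed

lemma l1_norm_zshift [simp]: "l1_norm (zshift r u) = l1_norm u"
  unfolding l1_norm_def zshift_def
  by (rule infsum_reindex_bij_witness[of _ "\<lambda>j. j + r" "\<lambda>i. i - r"]) auto

lemma summable_on_zshift_iff [simp]: "zshift r u summable_on UNIV \<longleftrightarrow> u summable_on UNIV"
  unfolding zshift_def
  by (rule summable_on_reindex_bij_witness[of _ "\<lambda>j. j + r" "\<lambda>i. i - r"]) auto

lemma summable_on_rev_seq_iff [simp]: "rev_seq u summable_on UNIV \<longleftrightarrow> u summable_on UNIV"
  unfolding rev_seq_def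
  by (rule summable_on_reindex_bij_witness[of _ uminus uminus]) auto

lemma zdelta_summable: "zdelta summable_on UNIV"
proof -
  have "zdelta summable_on {0}" by simp
  then show ?thesis
    by (rule summable_on_cong_neutral[THEN iffD1, rotated -1]) (auto simp: zdelta_def)
qed

lemma l1_norm_zdelta: "l1_norm zdelta = 1"
proof -
  have "l1_norm zdelta = (\<Sum>\<^sub>\<infinity>p\<in>{0}. \<bar>zdelta p\<bar>)"
    unfolding l1_norm_def by (rule infsum_cong_neutral) (auto simp: zdelta_def)
  then show ?thesis by (simp add: zdelta_def)
qed

lemma summable_on_l1_norm_bounded_family:
  fixes f :: "'b \<Rightarrow> 'a \<Rightarrow> real"
  assumes f: "\<And>n. f n summable_on UNIV" and le: "\<And>n. l1_norm (f n) \<le> g n"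
    and g: "g summable_on UNIV"
  shows "(\<lambda>(i, n). f n i) summable_on UNIV \<times> UNIV"
proof -
  have "(\<lambda>ni. norm (case ni of (n, i) \<Rightarrow> f n i)) summable_on UNIV \<times> UNIV"
  proof (rule Infinite_Sum.abs_summable_on_Sigma_iff[THEN iffD2], intro conjI ballI)
    show "(\<lambda>i. norm (case (n, i) of (n, i) \<Rightarrow> f n i)) summable_on UNIV" for n
      using f[of n] by (simp add: real_norm_def summable_on_abs_iff_real)
    have "norm (\<Sum>\<^sub>\<infinity>i. norm (case (n, i) of (n, i) \<Rightarrow> f n i)) \<le> g n" for n
      using le[of n] by (simp add: real_norm_def l1_norm_def infsum_nonneg)
    then show "(\<lambda>n. norm (\<Sum>\<^sub>\<infinity>i. norm (case (n, i) of (n, i) \<Rightarrow> f n i))) summable_on UNIV"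
      by (intro summable_on_comparison_test[OF g]) auto
  qed
  then have "(\<lambda>(n, i). f n i) summable_on UNIV \<times> UNIV"
    by (simp add: summable_on_iff_abs_summable_on_real[of "\<lambda>(n, i). f n i"])
  then show ?thesis
    by (subst summable_on_swap) (simp add: case_prod_unfold)
qed

lemma summable_on_zconv_family:
  fixes u v :: "int \<Rightarrow> real"
  assumes "u summable_on UNIV" "v summable_on UNIV"
  shows "(\<lambda>(i, p). u p * v (i - p)) summable_on UNIV"
proof -
  have "(\<lambda>(p, q). u p * v q) summable_on UNIV"
    using assms by (rule summable_on_product_real)
  also have "?this \<longleftrightarrow> ?thesis"
    by (rule summable_on_reindex_bij_witness[of _ "\<lambda>(i, p). (p, i - p)" "\<lambda>(p, q). (p + q, p)"])
      auto
  finally show ?thesis .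
qed

lemma summable_on_zconv_term:
  fixes u v :: "int \<Rightarrow> real"
  assumes "u summable_on UNIV" "\<And>j. \<bar>v j\<bar> \<le> M"
  shows "(\<lambda>p. u p * v (i - p)) summable_on UNIV"
  using assms by (rule summable_on_mult_bounded)

lemma summable_on_zconv:
  assumes "u summable_on UNIV" "v summable_on UNIV"
  shows "zconv u v summable_on UNIV"
proof -
  have "(\<lambda>(i, p). u p * v (i - p)) summable_on UNIV \<times> UNIV"
    using summable_on_zconv_family[OF assms] by simp
  then show ?thesis
    unfolding zconv_def[abs_def] by (rule summable_on_Sigma_banach)
qed

lemma l1_norm_zconv_le:
  assumes u: "u summable_on UNIV" and v: "v summable_on UNIV"
  shows "l1_norm (zconv u v) \<le> l1_norm u * l1_norm v"
proof -
  have au: "(\<lambda>p. \<bar>u p\<bar>) summable_on UNIV" and av: "(\<lambda>p. \<bar>v p\<bar>) summable_on UNIV"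
    using u v by (simp_all add: summable_on_abs_iff_real)
  have family: "(\<lambda>(i, p). \<bar>u p\<bar> * \<bar>v (i - p)\<bar>) summable_on UNIV \<times> UNIV"
    using summable_on_zconv_family[OF au av] by simp
  have pointwise: "\<bar>zconv u v i\<bar> \<le> (\<Sum>\<^sub>\<infinity>p. \<bar>u p\<bar> * \<bar>v (i - p)\<bar>)" for i
  proof -
    have "(\<lambda>p. norm (u p * v (i - p))) summable_on UNIV"
      using summable_on_zconv_term[OF u abs_le_l1_norm[OF v]]
      by (simp add: real_norm_def summable_on_abs_iff_real)
    then have "norm (zconv u v i) \<le> (\<Sum>\<^sub>\<infinity>p. norm (u p * v (i - p)))"
      unfolding zconv_def by (rule norm_infsum_bound)
    then show ?thesis by (simp add: abs_mult)
  qed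
  have "(\<lambda>i. \<bar>zconv u v i\<bar>) summable_on UNIV"
    using summable_on_zconv[OF u v] by (simp add: summable_on_abs_iff_real)
  then have "l1_norm (zconv u v) \<le> (\<Sum>\<^sub>\<infinity>i. \<Sum>\<^sub>\<infinity>p. \<bar>u p\<bar> * \<bar>v (i - p)\<bar>)"
    unfolding l1_norm_def
    using summable_on_Sigma_banach[OF family] pointwise by (rule infsum_mono)
  also have "\<dots> = (\<Sum>\<^sub>\<infinity>p. \<Sum>\<^sub>\<infinity>i. \<bar>u p\<bar> * \<bar>v (i - p)\<bar>)"
    using family by (rule infsum_swap_banach)
  also have "\<dots> = (\<Sum>\<^sub>\<infinity>p. \<bar>u p\<bar> * l1_norm v)"
  proof -
    have "(\<Sum>\<^sub>\<infinity>i. \<bar>v (i - p)\<bar>) = l1_norm v" for p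
      using l1_norm_zshift[of p v] by (simp add: l1_norm_def zshift_def)
    then show ?thesis by (simp add: infsum_cmult_right')
  qed
  also have "\<dots> = l1_norm u * l1_norm v"
    by (simp add: infsum_cmult_left' l1_norm_def)
  finally show ?thesis .
qed

lemma zconv_commute: "zconv u v = zconv v u"
proof
  show "zconv u v i = zconv v u i" for i
    unfolding zconv_def by (rule infsum_reindex_bij_witness[of _ "\<lambda>q. i - q" "\<lambda>p. i - p"]) auto
qed

lemma zconv_zdelta_left [simp]: "zconv zdelta v = v"
proof
  fix i
  have "zconv zdelta v i = (\<Sum>\<^sub>\<infinity>p\<in>{0}. zdelta p * v (i - p))"
    unfolding zconv_def by (rule infsum_cong_neutral) (auto simp: zdelta_def)
  then show "zconv zdelta v i = v i" by (simp add: zdelta_def)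
qed

lemma zconv_zdelta_right [simp]: "zconv v zdelta = v"
  by (simp add: zconv_commute[of v])

text \<open>The third factor need only be bounded: it will be the gradient \<open>\<nabla>y\<close>.\<close>

lemma zconv_assoc:
  fixes u v w :: "int \<Rightarrow> real"
  assumes u: "u summable_on UNIV" and v: "v summable_on UNIV" and w: "\<And>j. \<bar>w j\<bar> \<le> M"
  shows "zconv u (zconv v w) = zconv (zconv u v) w"
proof
  fix i
  define F where "F = (\<lambda>(p, q). u p * (v q * w (i - p - q)))"
  define G where "G = (\<lambda>(s, p). u p * v (s - p) * w (i - s))"
  have F: "F summable_on UNIV"
  proof (rule summable_on_comparison_abs)
    show "(\<lambda>pq. (case pq of (p, q) \<Rightarrow> u p * v q) * M) summable_on UNIV"
      using summable_on_product_real[OF u v] by (rule summable_on_cmult_left)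
    have "\<bar>u p\<bar> * (\<bar>v q\<bar> * \<bar>w (i - p - q)\<bar>) \<le> \<bar>u p\<bar> * (\<bar>v q\<bar> * \<bar>M\<bar>)" for p q
      using w[of "i - p - q"] by (intro mult_left_mono) auto
    then show "\<bar>F pq\<bar> \<le> \<bar>(case pq of (p, q) \<Rightarrow> u p * v q) * M\<bar>" for pq
      by (cases pq) (simp add: F_def abs_mult mult.assoc)
  qed
  have G: "G summable_on UNIV \<longleftrightarrow> F summable_on UNIV"
    by (rule summable_on_reindex_bij_witness[of _ "\<lambda>(p, q). (p + q, p)" "\<lambda>(s, p). (p, s - p)"])
      (auto simp: F_def G_def algebra_simps)
  have GF: "infsum G UNIV = infsum F UNIV"
    by (rule infsum_reindex_bij_witness[of _ "\<lambda>(p, q). (p + q, p)" "\<lambda>(s, p). (p, s - p)"])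
      (auto simp: F_def G_def algebra_simps)
  have "zconv u (zconv v w) i = (\<Sum>\<^sub>\<infinity>p. \<Sum>\<^sub>\<infinity>q. u p * (v q * w (i - p - q)))"
    unfolding zconv_def by (simp add: infsum_cmult_right' algebra_simps)
  also have "\<dots> = infsum F UNIV"
    using F by (simp add: F_def infsum_Sigma'_banach)
  also have "\<dots> = infsum G UNIV"
    by (rule GF[symmetric])
  also have "\<dots> = (\<Sum>\<^sub>\<infinity>s. \<Sum>\<^sub>\<infinity>p. u p * v (s - p) * w (i - s))"
    using F G by (simp add: G_def infsum_Sigma'_banach)
  also have "\<dots> = zconv (zconv u v) w i"
    unfolding zconv_def by (simp add: infsum_cmult_left')
  finally show "zconv u (zconv v w) i = zconv (zconv u v) w i" .
qed

lemma zconv_assoc_summable: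
  assumes "u summable_on UNIV" "v summable_on UNIV" "w summable_on UNIV"
  shows "zconv u (zconv v w) = zconv (zconv u v) w"
  using assms(1,2) abs_le_l1_norm[OF assms(3)] by (rule zconv_assoc)

lemma zconv_add_right:
  assumes "u summable_on UNIV" "v summable_on UNIV" "v' summable_on UNIV"
  shows "zconv u (\<lambda>j. v j + v' j) = (\<lambda>i. zconv u v i + zconv u v' i)"
proof
  fix i
  have "zconv u (\<lambda>j. v j + v' j) i = (\<Sum>\<^sub>\<infinity>p. u p * v (i - p) + u p * v' (i - p))"
    unfolding zconv_def by (simp add: algebra_simps)
  also have "\<dots> = zconv u v i + zconv u v' i"
    unfolding zconv_def
    using summable_on_zconv_term[OF assms(1) abs_le_l1_norm[OF assms(2)]]
      summable_on_zconv_term[OF assms(1) abs_le_l1_norm[OF assms(3)]]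
    by (rule infsum_add)
  finally show "zconv u (\<lambda>j. v j + v' j) i = zconv u v i + zconv u v' i" .
qed

lemma zconv_add_left:
  assumes "u summable_on UNIV" "v summable_on UNIV" "v' summable_on UNIV"
  shows "zconv (\<lambda>j. v j + v' j) u = (\<lambda>i. zconv v u i + zconv v' u i)"
  using zconv_add_right[OF assms] by (simp add: zconv_commute[of u])

lemma zconv_cmult_right: "zconv u (\<lambda>j. t * v j) = (\<lambda>i. t * zconv u v i)"
  unfolding zconv_def by (simp add: infsum_cmult_right'[symmetric] algebra_simps)

lemma zconv_cmult_left: "zconv (\<lambda>j. t * v j) u = (\<lambda>i. t * zconv v u i)"
  using zconv_cmult_right by (metis zconv_commute)

lemma zconv_zshift_right: "zconv u (zshift r v) = zshift r (zconv u v)"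
  unfolding zconv_def zshift_def by (simp add: algebra_simps)

lemma zconv_zshift_left: "zconv (zshift r u) v = zshift r (zconv u v)"
  by (metis zconv_commute zconv_zshift_right)

lemma zconv_zdelta_shift_right: "zconv u (\<lambda>j. zdelta (j - r)) = zshift r u"
  using zconv_zshift_right[of u r zdelta] by (simp add: zshift_def[abs_def])

lemma zdelta_shift_summable: "(\<lambda>j. zdelta (j - r)) summable_on UNIV"
  using zdelta_summable summable_on_zshift_iff[of r zdelta] by (simp add: zshift_def[abs_def])

lemma rev_seq_zconv: "rev_seq (zconv u v) = zconv (rev_seq u) (rev_seq v)"
proof
  show "rev_seq (zconv u v) i = zconv (rev_seq u) (rev_seq v) i" for i
    unfolding zconv_def rev_seq_def
    by (rule infsum_reindex_bij_witness[of _ uminus uminus]) auto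
qed

lemma zconv_rev_seq_eq_correlation: "zconv (rev_seq u) g r = (\<Sum>\<^sub>\<infinity>i. u (i - r) * g i)"
  unfolding zconv_def rev_seq_def
  by (rule infsum_reindex_bij_witness[of _ "\<lambda>i. r - i" "\<lambda>p. r - p"]) auto

lemma zconv_rev_seq_cancel:
  assumes a: "a summable_on UNIV" and b: "b summable_on UNIV" and v: "v summable_on UNIV"
    and ab: "zconv a b = zdelta" and g: "\<And>i. \<bar>g i\<bar> \<le> M"
  shows "zconv (rev_seq a) (zconv (rev_seq (zconv b v)) g) = zconv (rev_seq v) g"
proof -
  have "zconv a (zconv b v) = v"
    using zconv_assoc_summable[OF a b v] ab by simp
  then show ?thesis
    using zconv_assoc[OF _ _ g, of "rev_seq a" "rev_seq (zconv b v)"] a b v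
    by (simp add: summable_on_zconv rev_seq_zconv[symmetric])
qed

lemma zconv_infsum_right:
  fixes c :: "int \<Rightarrow> real" and f :: "'b \<Rightarrow> int \<Rightarrow> real"
  assumes c: "c summable_on UNIV" and g: "g summable_on UNIV" and f: "\<And>n j. \<bar>f n j\<bar> \<le> g n"
  shows "zconv c (\<lambda>j. \<Sum>\<^sub>\<infinity>n. f n j) i = (\<Sum>\<^sub>\<infinity>n. zconv c (f n) i)"
proof -
  have "(\<lambda>(p, n). c p * f n (i - p)) summable_on UNIV \<times> UNIV"
  proof (rule summable_on_comparison_abs)
    show "(\<lambda>(p, n). c p * g n) summable_on UNIV \<times> UNIV"
      using summable_on_product_real[OF c g] by simp
    show "\<bar>case pn of (p, n) \<Rightarrow> c p * f n (i - p)\<bar> \<le> \<bar>case pn of (p, n) \<Rightarrow> c p * g n\<bar>" for pn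
      using f[of "snd pn" "i - fst pn"]
      by (cases pn) (auto simp: abs_mult intro: mult_left_mono)
  qed
  then have "(\<Sum>\<^sub>\<infinity>p. \<Sum>\<^sub>\<infinity>n. c p * f n (i - p)) = (\<Sum>\<^sub>\<infinity>n. \<Sum>\<^sub>\<infinity>p. c p * f n (i - p))"
    by (rule infsum_swap_banach)
  then show ?thesis
    unfolding zconv_def by (simp add: infsum_cmult_right')
qed

lemma zconv_funpow_zdelta:
  assumes c: "c summable_on UNIV"
  shows "(zconv c ^^ n) zdelta summable_on UNIV \<and> l1_norm ((zconv c ^^ n) zdelta) \<le> l1_norm c ^ n"
proof (induction n)
  case 0
  show ?case by (simp add: zdelta_summable l1_norm_zdelta)
next
  case (Suc n)
  then have s: "(zconv c ^^ n) zdelta summable_on UNIV"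
    and le: "l1_norm ((zconv c ^^ n) zdelta) \<le> l1_norm c ^ n" by auto
  have "l1_norm (zconv c ((zconv c ^^ n) zdelta)) \<le> l1_norm c * l1_norm ((zconv c ^^ n) zdelta)"
    using c s by (rule l1_norm_zconv_le)
  also have "\<dots> \<le> l1_norm c * l1_norm c ^ n"
    using le by (rule mult_left_mono) (rule l1_norm_nonneg)
  finally show ?case
    using summable_on_zconv[OF c s] by simp
qed

lemma zconv_neumann_inverse:
  assumes c: "c summable_on UNIV" and small: "l1_norm c < 1"
  obtains e where "e summable_on UNIV" "(\<lambda>i. e i + zconv c e i) = zdelta"
proof -
  define K where "K = l1_norm c"
  define \<Phi> where "\<Phi> n i = (- 1) ^ n * (zconv c ^^ n) zdelta i" for n i
  have K: "0 \<le> K" "K < 1"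
    using small l1_norm_nonneg unfolding K_def by auto
  have \<Phi>: "\<Phi> n summable_on UNIV" "l1_norm (\<Phi> n) \<le> K ^ n" for n
    using zconv_funpow_zdelta[OF c, of n]
    by (simp_all add: \<Phi>_def[abs_def] K_def l1_norm_cmult summable_on_cmult_right)
  have geometric: "(\<lambda>n. K ^ n) summable_on UNIV"
    using K summable_geometric[of K] by (subst summable_on_UNIV_nonneg_real_iff) auto
  have \<Phi>_le: "\<bar>\<Phi> n i\<bar> \<le> K ^ n" for n i
    using order_trans[OF abs_le_l1_norm[OF \<Phi>(1)] \<Phi>(2)] .
  have family: "(\<lambda>(i, n). \<Phi> n i) summable_on UNIV \<times> UNIV"
    using \<Phi> geometric by (rule summable_on_l1_norm_bounded_family)
  define e where "e i = (\<Sum>\<^sub>\<infinity>n. \<Phi> n i)" for i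
  have "e summable_on UNIV"
    unfolding e_def[abs_def] using summable_on_Sigma_banach[OF family] by simp
  moreover have "e i + zconv c e i = zdelta i" for i
  proof -
    have "zconv c e i = (\<Sum>\<^sub>\<infinity>n. - \<Phi> (Suc n) i)"
      unfolding e_def[abs_def] using zconv_infsum_right[OF c geometric \<Phi>_le]
      by (simp add: \<Phi>_def zconv_cmult_right)
    moreover have "e i = \<Phi> 0 i + (\<Sum>\<^sub>\<infinity>n. \<Phi> (Suc n) i)"
      unfolding e_def using summable_on_SigmaD1[OF family, of i] by (simp add: infsum_nat_split_first)
    ultimately show ?thesis
      by (simp add: \<Phi>_def infsum_uminus)
  qed
  ultimately show thesis
    using that by blast
qed

lemma zconv_neumann_remainder_le:
  assumes c: "c summable_on UNIV" and z: "z summable_on UNIV"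
    and y_eq: "(\<lambda>i. z i + zconv c z i) = y" and small: "l1_norm c \<le> 1 / 2"
  shows "\<bar>z i - y i + zconv c y i\<bar> \<le> 2 * l1_norm c ^ 2 * l1_norm y"
proof -
  define K where "K = l1_norm c"
  have cz: "zconv c z summable_on UNIV"
    using c z by (rule summable_on_zconv)
  have y: "y summable_on UNIV"
    using summable_on_add[OF z cz] y_eq by simp
  have czK: "l1_norm (zconv c z) \<le> K * l1_norm z"
    unfolding K_def using c z by (rule l1_norm_zconv_le)
  have "l1_norm z \<le> l1_norm y + l1_norm (\<lambda>i. - 1 * zconv c z i)"
    using l1_norm_add_le[OF y summable_on_cmult_right[OF cz, of "- 1"]] y_eq[symmetric] by simp
  also have "\<dots> \<le> l1_norm y + K * l1_norm z"
    using czK l1_norm_cmult[of "- 1" "zconv c z"] by simp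
  also have "K * l1_norm z \<le> 1 / 2 * l1_norm z"
    unfolding K_def using small l1_norm_nonneg by (rule mult_right_mono)
  finally have z_le: "l1_norm z \<le> 2 * l1_norm y" by simp
  have "zconv c y = (\<lambda>i. zconv c z i + zconv c (zconv c z) i)"
    using zconv_add_right[OF c z cz] y_eq by simp
  moreover have "y i = z i + zconv c z i" for i
    using y_eq by auto
  ultimately have "z i - y i + zconv c y i = zconv c (zconv c z) i"
    by simp
  also have "\<bar>\<dots>\<bar> \<le> l1_norm (zconv c (zconv c z))"
    using summable_on_zconv[OF c cz] by (rule abs_le_l1_norm)
  also have "\<dots> \<le> K * l1_norm (zconv c z)"
    unfolding K_def using c cz by (rule l1_norm_zconv_le)
  also have "\<dots> \<le> K * (K * (2 * l1_norm y))"
    using czK z_le l1_norm_nonneg[of c]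
    by (intro mult_left_mono order_trans[OF czK] mult_left_mono) (simp_all add: K_def)
  finally show ?thesis
    by (simp add: K_def power2_eq_square algebra_simps)
qed

section \<open>Gradients of the ARMA solution on the integers\<close>

lemma zarma_sol_eq:
  assumes a: "a summable_on UNIV" and b: "b summable_on UNIV" and ba: "zconv b a = zdelta"
    and "y summable_on UNIV" "zconv a y = zconv w x"
  shows "zarma_sol a w x = y"
  unfolding zarma_sol_def
proof (rule the_equality)
  fix y' assume "y' summable_on UNIV \<and> zconv a y' = zconv w x"
  then have y': "y' summable_on UNIV" and y'_eq: "zconv a y' = zconv w x" by auto
  have "y' = zconv b (zconv a y')"
    using zconv_assoc_summable[OF b a y'] ba by simp
  also have "\<dots> = zconv b (zconv a y)"
    using y'_eq assms by simp
  also have "\<dots> = y"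
    using zconv_assoc_summable[OF b a assms(4)] ba by simp
  finally show "y' = y" .
qed (use assms in simp)

lemma zarma_sol_commute: "zarma_sol a w x = zarma_sol a x w"
  unfolding zarma_sol_def by (simp add: zconv_commute[of w])

lemma zarma_sol_perturb_input:
  assumes a: "a summable_on UNIV" and b: "b summable_on UNIV" and w: "w summable_on UNIV"
    and x: "x summable_on UNIV" and y: "y summable_on UNIV"
    and ab: "zconv a b = zdelta" and ba: "zconv b a = zdelta" and ay: "zconv a y = zconv w x"
  shows "zarma_sol a w (\<lambda>j. x j + t * zdelta (j - r)) = (\<lambda>i. y i + t * zshift r (zconv b w) i)"
proof (rule zarma_sol_eq[OF a b ba])
  have bw: "zshift r (zconv b w) summable_on UNIV"
    using summable_on_zconv[OF b w] by simp
  then show "(\<lambda>i. y i + t * zshift r (zconv b w) i) summable_on UNIV"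
    using y by (intro summable_on_add summable_on_cmult_right)
  have "zconv a (zconv b w) = w"
    using zconv_assoc_summable[OF a b w] ab by simp
  then have "zconv a (\<lambda>i. y i + t * zshift r (zconv b w) i) = (\<lambda>i. zconv w x i + t * zshift r w i)"
    using zconv_add_right[OF a y summable_on_cmult_right[OF bw]]
    by (simp add: ay zconv_cmult_right zconv_zshift_right)
  also have "\<dots> = zconv w (\<lambda>j. x j + t * zdelta (j - r))"
    using zconv_add_right[OF w x summable_on_cmult_right[OF zdelta_shift_summable]]
    by (simp add: zconv_cmult_right zconv_zdelta_shift_right)
  finally show "zconv a (\<lambda>i. y i + t * zshift r (zconv b w) i) = zconv w (\<lambda>j. x j + t * zdelta (j - r))" .
qed

lemma zarma_sol_zconv_right:
  assumes a: "a summable_on UNIV" and b: "b summable_on UNIV" and ba: "zconv b a = zdelta"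
    and d: "d summable_on UNIV" and e: "e summable_on UNIV" and de: "zconv d e = zdelta"
    and y: "y summable_on UNIV" and ay: "zconv a y = zconv w x"
  shows "zarma_sol (zconv a d) w x = zconv e y"
proof (rule zarma_sol_eq)
  have eb: "zconv e b summable_on UNIV"
    using e b by (rule summable_on_zconv)
  have "zconv (zconv e b) (zconv a d) = zconv e (zconv (zconv b a) d)"
    using zconv_assoc_summable[OF eb a d] zconv_assoc_summable[OF e b a]
      zconv_assoc_summable[OF e summable_on_zconv[OF b a] d] zconv_assoc_summable[OF b a d]
    by simp
  then show "zconv (zconv e b) (zconv a d) = zdelta"
    using ba de by (simp add: zconv_commute[of e])
  have "zconv d (zconv e y) = y"
    using zconv_assoc_summable[OF d e y] de by simp
  then show "zconv (zconv a d) (zconv e y) = zconv w x"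
    using zconv_assoc_summable[OF a d summable_on_zconv[OF e y]] ay by simp
qed (use assms in \<open>simp_all add: summable_on_zconv\<close>)

lemma zarma_sol_perturb_coeff:
  fixes t :: real and r :: int
  assumes a: "a summable_on UNIV" and b: "b summable_on UNIV" and y: "y summable_on UNIV"
    and ab: "zconv a b = zdelta" and ba: "zconv b a = zdelta" and ay: "zconv a y = zconv w x"
    and small: "\<bar>t\<bar> * l1_norm b < 1"
  defines "z \<equiv> zarma_sol (\<lambda>j. a j + t * zdelta (j - r)) w x"
  shows "z summable_on UNIV" and "(\<lambda>i. z i + zconv (\<lambda>j. t * zshift r b j) z i) = y"
proof -
  define c where "c j = t * zshift r b j" for j
  have c: "c summable_on UNIV"
    using b by (simp add: c_def[abs_def] summable_on_cmult_right)
  have "l1_norm c < 1"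
    using small by (simp add: c_def[abs_def] l1_norm_cmult)
  then obtain e where e: "e summable_on UNIV" and e_inv: "(\<lambda>i. e i + zconv c e i) = zdelta"
    using zconv_neumann_inverse[OF c] by blast
  define d where "d i = zdelta i + c i" for i
  have d: "d summable_on UNIV"
    using zdelta_summable c by (simp add: d_def[abs_def] summable_on_add)
  have "zconv a d = (\<lambda>j. a j + t * zdelta (j - r))"
    using zconv_add_right[OF a zdelta_summable c] ab
    by (simp add: d_def[abs_def] c_def[abs_def] zconv_cmult_right zconv_zshift_right)
      (simp add: zshift_def)
  moreover have "zconv d e = zdelta"
    using zconv_add_left[OF e zdelta_summable c] e_inv by (simp add: d_def[abs_def])
  ultimately have "z = zconv e y"
    unfolding z_def using zarma_sol_zconv_right[OF a b ba d e _ y ay] by simp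
  then show "z summable_on UNIV" and "(\<lambda>i. z i + zconv (\<lambda>j. t * zshift r b j) z i) = y"
    using summable_on_zconv[OF e y] zconv_add_left[OF summable_on_zconv[OF e y] zdelta_summable c]
      zconv_assoc_summable[OF d e y] \<open>zconv d e = zdelta\<close>
    by (simp_all add: d_def[abs_def] c_def[abs_def])
qed

lemma zpartial_zarma_sol_input:
  assumes a: "a summable_on UNIV" and b: "b summable_on UNIV" and w: "w summable_on UNIV"
    and x: "x summable_on UNIV" and y: "y summable_on UNIV"
    and ab: "zconv a b = zdelta" and ba: "zconv b a = zdelta" and ay: "zconv a y = zconv w x"
  shows "zpartial (\<lambda>x'. zarma_sol a w x') x r i = zconv b w (i - r)"
proof -
  have "((\<lambda>t. y i + t * zshift r (zconv b w) i) has_real_derivative zshift r (zconv b w) i) (at 0)"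
    by (auto intro!: derivative_eq_intros)
  then show ?thesis
    unfolding zpartial_def zarma_sol_perturb_input[OF assms]
    by (simp add: DERIV_imp_deriv zshift_def)
qed

lemma zpartial_zarma_sol_coeff:
  assumes a: "a summable_on UNIV" and b: "b summable_on UNIV" and y: "y summable_on UNIV"
    and ab: "zconv a b = zdelta" and ba: "zconv b a = zdelta" and ay: "zconv a y = zconv w x"
  shows "zpartial (\<lambda>a'. zarma_sol a' w x) a r i = - zconv b y (i - r)"
proof -
  define f where "f t = zarma_sol (\<lambda>j. a j + t * zdelta (j - r)) w x i" for t
  define D where "D = - zconv b y (i - r)"
  define \<delta> where "\<delta> = 1 / (2 * l1_norm b + 1)"
  have \<delta>: "0 < \<delta>"
    using l1_norm_nonneg[of b] by (simp add: \<delta>_def)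
  have "\<bar>f t - f 0 - D * t\<bar> \<le> (2 * l1_norm b ^ 2 * l1_norm y) * t ^ 2" if t: "\<bar>t\<bar> < \<delta>" for t
  proof -
    define c where "c j = t * zshift r b j" for j
    define z where "z = zarma_sol (\<lambda>j. a j + t * zdelta (j - r)) w x"
    have "\<bar>t\<bar> * (2 * l1_norm b + 1) < 1"
      using t l1_norm_nonneg[of b] by (simp add: \<delta>_def field_simps)
    then have c_small: "l1_norm c \<le> 1 / 2"
      using l1_norm_nonneg[of b] by (simp add: c_def[abs_def] l1_norm_cmult algebra_simps)
    have z: "z summable_on UNIV" "(\<lambda>i. z i + zconv c z i) = y"
      using zarma_sol_perturb_coeff[OF a b y ab ba ay, of t r] c_small
      by (simp_all add: z_def c_def[abs_def] l1_norm_cmult)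
    have c: "c summable_on UNIV"
      using b by (simp add: c_def[abs_def] summable_on_cmult_right)
    have "f 0 = y i"
      using zarma_sol_eq[OF a b ba y ay] by (simp add: f_def)
    then have "f t - f 0 - D * t = z i - y i + zconv c y i"
      by (simp add: f_def z_def D_def c_def[abs_def] zconv_cmult_left zconv_zshift_left)
        (simp add: zshift_def)
    also have "\<bar>\<dots>\<bar> \<le> 2 * l1_norm c ^ 2 * l1_norm y"
      using c z c_small by (rule zconv_neumann_remainder_le)
    also have "\<dots> = (2 * l1_norm b ^ 2 * l1_norm y) * t ^ 2"
      by (simp add: c_def[abs_def] l1_norm_cmult power_mult_distrib)
    finally show ?thesis .
  qed
  then have "(f has_derivative (\<lambda>t. D * t)) (at 0)"
    by (intro has_derivative_at_quadratic_remainder[OF bounded_linear_mult_right \<delta>]) auto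
  then show ?thesis
    unfolding zpartial_def f_def[symmetric] D_def[symmetric]
    by (simp add: DERIV_imp_deriv has_field_derivative_def)
qed

lemma zarma_gradients:
  assumes a: "a summable_on UNIV" and b: "b summable_on UNIV" and w: "w summable_on UNIV"
    and x: "x summable_on UNIV" and y: "y summable_on UNIV" and gy: "bounded (range gy)"
    and ab: "zconv a b = zdelta" and ba: "zconv b a = zdelta" and ay: "zconv a y = zconv w x"
  shows "zconv (rev_seq a) (zchain_grad (\<lambda>x'. zarma_sol a w x') x gy) = zconv (rev_seq w) gy"
    and "(\<lambda>i. - zconv (rev_seq a) (zchain_grad (\<lambda>a'. zarma_sol a' w x) a gy) i)
           = zconv (rev_seq y) gy"
    and "zconv (rev_seq a) (zchain_grad (\<lambda>w'. zarma_sol a w' x) w gy) = zconv (rev_seq x) gy"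
proof -
  obtain M where M: "\<And>i. \<bar>gy i\<bar> \<le> M"
    using gy by (auto simp: bounded_iff)
  have input_grad: "zchain_grad (\<lambda>x'. zarma_sol a u x') v gy = zconv (rev_seq (zconv b u)) gy"
    if "u summable_on UNIV" "v summable_on UNIV" "zconv a y = zconv u v" for u v
    unfolding zchain_grad_def[abs_def] zconv_rev_seq_eq_correlation
    by (simp add: zpartial_zarma_sol_input[OF a b that(1,2) y ab ba that(3)])
  show "zconv (rev_seq a) (zchain_grad (\<lambda>x'. zarma_sol a w x') x gy) = zconv (rev_seq w) gy"
    using input_grad[OF w x ay] zconv_rev_seq_cancel[OF a b w ab M] by simp
  show "zconv (rev_seq a) (zchain_grad (\<lambda>w'. zarma_sol a w' x) w gy) = zconv (rev_seq x) gy"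
    using input_grad[OF x w] ay zconv_rev_seq_cancel[OF a b x ab M]
    by (simp add: zarma_sol_commute[of a _ x] zconv_commute[of x])
  have "zchain_grad (\<lambda>a'. zarma_sol a' w x) a gy = (\<lambda>r. - zconv (rev_seq (zconv b y)) gy r)"
    unfolding zchain_grad_def[abs_def] zconv_rev_seq_eq_correlation
    by (simp add: zpartial_zarma_sol_coeff[OF a b y ab ba ay] infsum_uminus)
  then show "(\<lambda>i. - zconv (rev_seq a) (zchain_grad (\<lambda>a'. zarma_sol a' w x) a gy) i)
      = zconv (rev_seq y) gy"
    using zconv_rev_seq_cancel[OF a b y ab M]
    by (simp add: zconv_cmult_right[of _ "- 1", simplified])
qed

section \<open>Circular convolution\<close>

definition cdelta :: "real^'n::{finite,comm_ring_1}" where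
  "cdelta = (\<chi> i. if i = 0 then 1 else 0)"

lemma cconv_nth: "cconv u v $ i = (\<Sum>p\<in>UNIV. u $ p * v $ (i - p))"
  by (simp add: cconv_def)

lemma crev_nth: "crev u $ i = u $ (- i)"
  by (simp add: crev_def)

lemma cconv_commute: "cconv u v = cconv v u"
proof -
  have "cconv u v $ i = cconv v u $ i" for i
    unfolding cconv_nth by (rule sum.reindex_bij_witness[of _ "\<lambda>q. i - q" "\<lambda>p. i - p"]) auto
  then show ?thesis by (simp add: vec_eq_iff)
qed

lemma cconv_assoc: "cconv u (cconv v w) = cconv (cconv u v) w"
proof -
  have "cconv u (cconv v w) $ i = cconv (cconv u v) w $ i" for i
  proof -
    have "cconv u (cconv v w) $ i = (\<Sum>p\<in>UNIV. \<Sum>q\<in>UNIV. u $ p * (v $ q * w $ (i - p - q)))"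
      unfolding cconv_nth by (simp add: sum_distrib_left algebra_simps)
    also have "\<dots> = (\<Sum>p\<in>UNIV. \<Sum>s\<in>UNIV. u $ p * v $ (s - p) * w $ (i - s))"
    proof (rule sum.cong[OF refl])
      show "(\<Sum>q\<in>UNIV. u $ p * (v $ q * w $ (i - p - q)))
          = (\<Sum>s\<in>UNIV. u $ p * v $ (s - p) * w $ (i - s))" for p
        by (rule sum.reindex_bij_witness[of _ "\<lambda>s. s - p" "\<lambda>q. q + p"]) (auto simp: algebra_simps)
    qed
    also have "\<dots> = (\<Sum>s\<in>UNIV. \<Sum>p\<in>UNIV. u $ p * v $ (s - p) * w $ (i - s))"
      by (rule sum.swap)
    also have "\<dots> = cconv (cconv u v) w $ i"
      unfolding cconv_nth by (simp add: sum_distrib_right)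
    finally show ?thesis .
  qed
  then show ?thesis by (simp add: vec_eq_iff)
qed

lemma cconv_cdelta_left [simp]:
  fixes v :: "real^'n::{finite,comm_ring_1}"
  shows "cconv cdelta v = v"
proof -
  have "cconv cdelta v $ i = (\<Sum>p\<in>(UNIV::'n set). if p = 0 then v $ i else 0)" for i
    unfolding cconv_nth cdelta_def by (rule sum.cong[OF refl]) auto
  then show ?thesis by (simp add: vec_eq_iff)
qed

lemma linear_cconv: "linear (cconv u)"
proof (rule linearI)
  show "cconv u (v + w) = cconv u v + cconv u w" for v w
    by (simp add: vec_eq_iff cconv_nth algebra_simps sum.distrib)
  show "cconv u (t *\<^sub>R v) = t *\<^sub>R cconv u v" for t v
    by (simp add: vec_eq_iff cconv_nth algebra_simps sum_distrib_left)
qed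

lemma linear_cconv_cconv: "linear (\<lambda>v. cconv u (cconv h v))"
  using linear_compose[OF linear_cconv linear_cconv] by (simp add: o_def)

lemma bilinear_cconv: "bilinear cconv"
  unfolding bilinear_def
proof (intro conjI allI)
  show "linear (cconv u)" for u
    by (rule linear_cconv)
  show "linear (\<lambda>u. cconv u v)" for v
  proof -
    have "(\<lambda>u. cconv u v) = cconv v"
      by (rule ext) (rule cconv_commute)
    then show ?thesis
      using linear_cconv[of v] by (simp only:)
  qed
qed

lemma cconv_0_right [simp]: "cconv u 0 = 0"
  by (rule linear_0[OF linear_cconv])

lemma cconv_0_left [simp]: "cconv 0 v = 0"
  by (simp add: cconv_commute[of 0])

lemma crev_cconv: "crev (cconv u v) = cconv (crev u) (crev v)"
proof -
  have "crev (cconv u v) $ i = cconv (crev u) (crev v) $ i" for i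
    unfolding cconv_nth crev_nth by (rule sum.reindex_bij_witness[of _ uminus uminus]) auto
  then show ?thesis by (simp add: vec_eq_iff)
qed

lemma inner_cconv_right: "g \<bullet> cconv c h = cconv (crev c) g \<bullet> h"
proof -
  have "g \<bullet> cconv c h = (\<Sum>p\<in>UNIV. \<Sum>i\<in>UNIV. g $ i * c $ p * h $ (i - p))"
    by (subst sum.swap) (simp add: inner_vec_def cconv_nth sum_distrib_left algebra_simps)
  also have "\<dots> = (\<Sum>p\<in>UNIV. \<Sum>j\<in>UNIV. g $ (j + p) * c $ p * h $ j)"
  proof (rule sum.cong[OF refl])
    show "(\<Sum>i\<in>UNIV. g $ i * c $ p * h $ (i - p)) = (\<Sum>j\<in>UNIV. g $ (j + p) * c $ p * h $ j)" for p
      by (rule sum.reindex_bij_witness[of _ "\<lambda>j. j + p" "\<lambda>i. i - p"]) auto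
  qed
  also have "\<dots> = (\<Sum>j\<in>UNIV. \<Sum>q\<in>UNIV. c $ (- q) * g $ (j - q) * h $ j)"
  proof (subst sum.swap, rule sum.cong[OF refl])
    show "(\<Sum>p\<in>UNIV. g $ (j + p) * c $ p * h $ j) = (\<Sum>q\<in>UNIV. c $ (- q) * g $ (j - q) * h $ j)" for j
      by (rule sum.reindex_bij_witness[of _ uminus uminus]) auto
  qed
  also have "\<dots> = cconv (crev c) g \<bullet> h"
    by (simp add: inner_vec_def cconv_nth crev_nth sum_distrib_right)
  finally show ?thesis .
qed

lemma cconv_crev_cancel:
  assumes "cconv a b = cdelta"
  shows "cconv (crev a) (cconv (crev (cconv b v)) g) = cconv (crev v) g"
proof -
  have "cconv a (cconv b v) = v"
    by (simp add: cconv_assoc assms)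
  then show ?thesis
    by (metis cconv_assoc crev_cconv)
qed

section \<open>The discrete Fourier transform on a finite cyclic ring\<close>

lemma bij_betw_of_nat_CHAR:
  assumes surj: "surj (of_int :: int \<Rightarrow> 'a::{finite,comm_ring_1})"
  shows "bij_betw (of_nat :: nat \<Rightarrow> 'a) {..<CHAR('a)} UNIV"
proof -
  have pos: "0 < CHAR('a)"
    by (rule finite_imp_CHAR_pos) simp
  have "inj_on (of_nat :: nat \<Rightarrow> 'a) {..<CHAR('a)}"
    by (auto intro!: inj_onI simp: of_nat_eq_iff_cong_CHAR cong_less_modulus_unique_nat)
  moreover have "x \<in> of_nat ` {..<CHAR('a)}" for x :: 'a
  proof -
    obtain k where x: "x = of_int k"
      using surj by (metis surjD)
    have "x = of_int (k mod int CHAR('a))"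
      unfolding x of_int_eq_iff_cong_CHAR by (simp add: cong_sym)
    also have "\<dots> = of_nat (nat (k mod int CHAR('a)))"
      using pos by simp
    finally show ?thesis
      using pos by (intro image_eqI[of _ _ "nat (k mod int CHAR('a))"]) (auto simp: nat_less_iff)
  qed
  ultimately show ?thesis
    by (auto simp: bij_betw_def)
qed

lemma CARD_eq_CHAR:
  assumes "surj (of_int :: int \<Rightarrow> 'a::{finite,comm_ring_1})"
  shows "CARD('a) = CHAR('a)"
  using bij_betw_same_card[OF bij_betw_of_nat_CHAR[OF assms]] by simp

definition cindex :: "'a::{finite,comm_ring_1} \<Rightarrow> nat" where
  "cindex = inv_into {..<CARD('a)} of_nat"

lemma
  assumes surj: "surj (of_int :: int \<Rightarrow> 'a::{finite,comm_ring_1})"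
  shows cindex_less: "cindex (i :: 'a) < CARD('a)"
    and of_nat_cindex [simp]: "of_nat (cindex i) = i"
    and cindex_of_nat: "j < CARD('a) \<Longrightarrow> cindex (of_nat j :: 'a) = j"
proof -
  have inj: "inj_on (of_nat :: nat \<Rightarrow> 'a) {..<CARD('a)}" and onto: "i \<in> of_nat ` {..<CARD('a)}"
    using bij_betw_of_nat_CHAR[OF surj] unfolding CARD_eq_CHAR[OF surj] bij_betw_def by auto
  show "cindex i < CARD('a)"
    using inv_into_into[OF onto] by (simp add: cindex_def)
  show "of_nat (cindex i) = i"
    using f_inv_into_f[OF onto] by (simp add: cindex_def)
  show "cindex (of_nat j :: 'a) = j" if "j < CARD('a)"
    using inv_into_f_f[OF inj] that by (simp add: cindex_def)
qed

lemma cindex_add: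
  assumes surj: "surj (of_int :: int \<Rightarrow> 'a::{finite,comm_ring_1})"
  shows "cindex (i + j :: 'a) = (cindex i + cindex j) mod CARD('a)"
proof -
  have "(of_nat ((cindex i + cindex j) mod CARD('a)) :: 'a) = of_nat (cindex i + cindex j)"
    unfolding of_nat_eq_iff_cong_CHAR CARD_eq_CHAR[OF surj] by (simp add: cong_def)
  also have "\<dots> = i + j"
    using surj by simp
  finally show ?thesis
    using cindex_of_nat[OF surj, of "(cindex i + cindex j) mod CARD('a)"] by simp
qed

definition unit_root :: "nat \<Rightarrow> complex" where
  "unit_root N = cis (- 2 * pi / real N)"

lemma unit_root_power: "unit_root N ^ m = cis (- 2 * pi * real m / real N)"
  unfolding unit_root_def by (subst Complex.DeMoivre) (simp add: mult_ac)

lemma unit_root_power_eq_1_iff: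
  assumes "0 < N"
  shows "unit_root N ^ m = 1 \<longleftrightarrow> N dvd m"
proof -
  have "unit_root N ^ m = inverse (exp (2 * of_real pi * \<i> * of_nat m / of_nat N))"
    by (simp add: unit_root_power cis_conv_exp exp_minus[symmetric] mult_ac)
  then show ?thesis
    using complex_root_unity_eq_1[of N m] assms by simp
qed

lemma unit_root_power_mod:
  assumes "0 < N"
  shows "unit_root N ^ m = unit_root N ^ (m mod N)"
proof -
  have "unit_root N ^ m = (unit_root N ^ N) ^ (m div N) * unit_root N ^ (m mod N)"
    by (simp flip: power_mult power_add)
  then show ?thesis
    using unit_root_power_eq_1_iff[OF assms, of N] by simp
qed

definition dft_char :: "nat \<Rightarrow> 'a::{finite,comm_ring_1} \<Rightarrow> complex" where
  "dft_char k i = unit_root CARD('a) ^ (cindex i * k)"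

definition dft :: "real^'a::{finite,comm_ring_1} \<Rightarrow> nat \<Rightarrow> complex" where
  "dft u k = (\<Sum>i\<in>UNIV. complex_of_real (u $ i) * dft_char k i)"

lemma dft_char_add:
  assumes surj: "surj (of_int :: int \<Rightarrow> 'a::{finite,comm_ring_1})"
  shows "dft_char k (i + j :: 'a) = dft_char k i * dft_char k j"
proof -
  let ?s = "cindex i + cindex j"
  have "unit_root CARD('a) ^ (cindex (i + j) * k) = unit_root CARD('a) ^ (?s mod CARD('a) * k mod CARD('a))"
    unfolding cindex_add[OF surj] by (rule unit_root_power_mod) simp
  also have "\<dots> = unit_root CARD('a) ^ (?s * k)"
    unfolding mod_mult_left_eq by (rule unit_root_power_mod[symmetric]) simp
  finally show ?thesis
    by (simp add: dft_char_def distrib_right power_add)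
qed

lemma sum_dft_char:
  assumes surj: "surj (of_int :: int \<Rightarrow> 'a::{finite,comm_ring_1})"
  shows "(\<Sum>k<CARD('a). dft_char k (j :: 'a)) = (if j = 0 then of_nat CARD('a) else 0)"
proof (cases "j = 0")
  case True
  then show ?thesis
    using cindex_of_nat[OF surj, of 0] by (simp add: dft_char_def)
next
  case False
  define \<zeta> where "\<zeta> = unit_root CARD('a) ^ cindex j"
  have "cindex j \<noteq> 0"
    using False of_nat_cindex[OF surj, of j] by (metis of_nat_0)
  then have "\<zeta> \<noteq> 1"
    using cindex_less[OF surj, of j] unit_root_power_eq_1_iff[of "CARD('a)" "cindex j"]
    by (auto simp: \<zeta>_def dest: dvd_imp_le)
  moreover have "\<zeta> ^ CARD('a) = 1"
    using unit_root_power_eq_1_iff[of "CARD('a)" "cindex j * CARD('a)"]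
    by (simp add: \<zeta>_def power_mult[symmetric])
  ultimately have "(\<Sum>k<CARD('a). \<zeta> ^ k) = 0"
    by (simp add: geometric_sum)
  then show ?thesis
    using False by (simp add: dft_char_def \<zeta>_def power_mult)
qed

lemma cdft_eq_dft:
  fixes a :: "real^'a::{finite,comm_ring_1}"
  assumes surj: "surj (of_int :: int \<Rightarrow> 'a)"
  shows "cdft a k = dft a k"
proof -
  have bij: "bij_betw (of_nat :: nat \<Rightarrow> 'a) {..<CARD('a)} UNIV"
    using bij_betw_of_nat_CHAR[OF surj] by (simp add: CARD_eq_CHAR[OF surj])
  have "dft a k = (\<Sum>j<CARD('a). complex_of_real (a $ of_nat j) * dft_char k (of_nat j :: 'a))"
    unfolding dft_def by (rule sum.reindex_bij_betw[OF bij, symmetric])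
  also have "\<dots> = cdft a k"
    unfolding cdft_def
    by (intro sum.cong refl) (simp add: dft_char_def cindex_of_nat[OF surj] unit_root_power mult_ac)
  finally show ?thesis ..
qed

lemma dft_cconv:
  fixes a z :: "real^'a::{finite,comm_ring_1}"
  assumes surj: "surj (of_int :: int \<Rightarrow> 'a)"
  shows "dft (cconv a z) k = dft a k * dft z k"
proof -
  have "dft (cconv a z) k
      = (\<Sum>p\<in>UNIV. \<Sum>i\<in>UNIV. of_real (a $ p) * of_real (z $ (i - p)) * dft_char k i)"
    unfolding dft_def cconv_nth by (subst sum.swap) (simp add: sum_distrib_right)
  also have "\<dots> = (\<Sum>p\<in>UNIV. of_real (a $ p) * dft_char k p * dft z k)"
  proof (rule sum.cong[OF refl])
    fix p
    have "(\<Sum>i\<in>UNIV. of_real (a $ p) * of_real (z $ (i - p)) * dft_char k i)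
        = (\<Sum>j\<in>UNIV. of_real (a $ p) * of_real (z $ j) * dft_char k (j + p))"
      by (rule sum.reindex_bij_witness[of _ "\<lambda>j. j + p" "\<lambda>i. i - p"]) auto
    also have "\<dots> = of_real (a $ p) * dft_char k p * dft z k"
      unfolding dft_def by (simp add: dft_char_add[OF surj] sum_distrib_left algebra_simps)
    finally show "(\<Sum>i\<in>UNIV. of_real (a $ p) * of_real (z $ (i - p)) * dft_char k i)
        = of_real (a $ p) * dft_char k p * dft z k" .
  qed
  also have "\<dots> = dft a k * dft z k"
    unfolding dft_def[of a] by (simp add: sum_distrib_right)
  finally show ?thesis .
qed

lemma dft_inversion:
  fixes z :: "real^'a::{finite,comm_ring_1}"
  assumes surj: "surj (of_int :: int \<Rightarrow> 'a)"
  shows "(\<Sum>k<CARD('a). dft z k * dft_char k (- i)) = of_nat CARD('a) * of_real (z $ i)"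
proof -
  have "dft_char k (j - i) = dft_char k j * dft_char k (- i)" for k j
    using dft_char_add[OF surj, of k j "- i"] by simp
  then have "(\<Sum>k<CARD('a). dft z k * dft_char k (- i))
      = (\<Sum>k<CARD('a). \<Sum>j\<in>UNIV. of_real (z $ j) * dft_char k (j - i))"
    unfolding dft_def by (simp add: sum_distrib_right mult.assoc)
  also have "\<dots> = (\<Sum>j\<in>UNIV. of_real (z $ j) * (\<Sum>k<CARD('a). dft_char k (j - i)))"
    by (subst sum.swap) (simp add: sum_distrib_left)
  also have "\<dots> = (\<Sum>j\<in>UNIV. if j = i then of_real (z $ i) * of_nat CARD('a) else 0)"
    by (intro sum.cong refl) (simp add: sum_dft_char[OF surj])
  finally show ?thesis
    by simp
qed

lemma inj_cconv_if_cdft_nonzero: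
  fixes a :: "real^'a::{finite,comm_ring_1}"
  assumes surj: "surj (of_int :: int \<Rightarrow> 'a)" and nonzero: "\<forall>k<CARD('a). cdft a k \<noteq> 0"
  shows "inj (cconv a)"
proof (rule linear_injective_0[OF linear_cconv, THEN iffD2], intro allI impI)
  fix z assume z: "cconv a z = 0"
  have "dft z k = 0" if "k < CARD('a)" for k
  proof -
    have "dft a k * dft z k = 0"
      using dft_cconv[OF surj, of a z] by (simp add: z dft_def)
    moreover have "dft a k \<noteq> 0"
      using nonzero that by (simp add: cdft_eq_dft[OF surj])
    ultimately show ?thesis by simp
  qed
  then have "of_nat CARD('a) * complex_of_real (z $ i) = 0" for i
    using dft_inversion[OF surj, of z i] by simp
  then show "z = 0"
    by (simp add: vec_eq_iff)
qed

section \<open>Gradients of the periodic ARMA solution\<close>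

lemma carma_sol_eq:
  assumes "inj (cconv a)" "cconv a y = cconv w x"
  shows "carma_sol a w x = y"
  unfolding carma_sol_def
proof (rule the_equality)
  show "y' = y" if "cconv a y' = cconv w x" for y'
    using injD[OF assms(1)] that assms(2) by simp
qed (rule assms(2))

lemma carma_sol_commute: "carma_sol a w x = carma_sol a x w"
  unfolding carma_sol_def by (simp add: cconv_commute[of w])

lemma cconv_right_inverse:
  fixes a :: "real^'a::{finite,comm_ring_1}"
  assumes "inj (cconv a)"
  obtains b where "cconv a b = cdelta"
  using linear_injective_imp_surjective[OF linear_cconv assms] by (metis surjD)

lemma carma_sol_perturb_coeff:
  fixes a b h w x y :: "real^'a::{finite,comm_ring_1}"
  assumes ab: "cconv a b = cdelta" and ay: "cconv a y = cconv w x"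
    and bound: "\<And>v. norm (cconv b (cconv h v)) \<le> q * norm v" and q: "0 \<le> q" "q \<le> 1 / 2"
  defines "z \<equiv> carma_sol (a + h) w x"
  shows "z + cconv b (cconv h z) = y"
proof -
  have solves: "v + cconv b (cconv h v) = u" if "cconv (a + h) v = cconv a u" for u v
  proof -
    have "cconv b (cconv a v + cconv h v) = cconv b (cconv a u)"
      using that linear_add[OF linear_cconv, of v a h] by (simp add: cconv_commute[of _ v])
    then show ?thesis
      using ab cconv_commute[of b a] by (simp add: linear_add[OF linear_cconv] cconv_assoc)
  qed
  have "inj (cconv (a + h))"
  proof (rule linear_injective_0[OF linear_cconv, THEN iffD2], intro allI impI)
    fix v assume "cconv (a + h) v = 0"
    then have "v + cconv b (cconv h v) = 0"
      using solves[of v 0] by simp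
    then show "v = 0"
      using linear_neumann_remainder_le[OF linear_cconv_cconv bound q, of v 0] by simp
  qed
  moreover obtain v where "cconv (a + h) v = cconv w x"
    using linear_injective_imp_surjective[OF linear_cconv calculation] by (metis surjD)
  ultimately show ?thesis
    unfolding z_def using carma_sol_eq solves[of v y] ay by auto
qed

lemma carma_sol_has_derivative_coeff:
  fixes a b w x y :: "real^'a::{finite,comm_ring_1}"
  assumes ab: "cconv a b = cdelta" and ay: "cconv a y = cconv w x"
  shows "((\<lambda>a'. carma_sol a' w x) has_derivative (\<lambda>h. - cconv (cconv b y) h)) (at a)"
proof -
  obtain B where B: "0 < B" "\<And>u v. norm (cconv u v :: real^'a::{finite,comm_ring_1}) \<le> B * norm u * norm v"
    using bilinear_bounded_pos[OF bilinear_cconv] by blast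
  define \<kappa> where "\<kappa> = B * norm b * B"
  have \<kappa>: "0 \<le> \<kappa>"
    using B by (simp add: \<kappa>_def)
  have bound: "norm (cconv b (cconv h v)) \<le> (\<kappa> * norm h) * norm v" for h v :: "real^'a::{finite,comm_ring_1}"
  proof -
    have "norm (cconv b (cconv h v)) \<le> B * norm b * (B * norm h * norm v)"
      using B order_trans[OF B(2) mult_left_mono[OF B(2)]] by simp
    then show ?thesis by (simp add: \<kappa>_def mult_ac)
  qed
  have y: "carma_sol a w x = y"
    using carma_sol_perturb_coeff[OF ab ay, of 0 0] by simp
  have remainder: "norm (carma_sol (a + h) w x - carma_sol a w x - - cconv (cconv b y) h)
      \<le> 2 * \<kappa>\<^sup>2 * norm y * (norm h)\<^sup>2" if h: "norm h < 1 / (2 * \<kappa> + 1)" for h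
  proof -
    have "norm h * (2 * \<kappa> + 1) < 1"
      using h \<kappa> by (simp add: field_simps)
    moreover have "norm h * (2 * \<kappa> + 1) = 2 * (\<kappa> * norm h) + norm h"
      by (simp add: algebra_simps)
    ultimately have q: "0 \<le> \<kappa> * norm h" "\<kappa> * norm h \<le> 1 / 2"
      using \<kappa> norm_ge_zero[of h] by (simp, linarith)
    have "cconv (cconv b y) h = cconv b (cconv h y)"
      by (simp add: cconv_assoc cconv_commute[of h])
    then show ?thesis
      using linear_neumann_remainder_le[OF linear_cconv_cconv bound q
          carma_sol_perturb_coeff[OF ab ay bound q]] y
      by (simp add: power_mult_distrib mult_ac)
  qed
  have "bounded_linear (\<lambda>h. - cconv (cconv b y) h)"
    by (rule linear_conv_bounded_linear[THEN iffD1]) (intro linear_compose_neg linear_cconv)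
  moreover have "0 < 1 / (2 * \<kappa> + 1)"
    using \<kappa> by simp
  ultimately show ?thesis
    using remainder by (rule has_derivative_at_quadratic_remainder)
qed

lemma has_derivative_comp_cconv:
  fixes c :: "real^'a::{finite,comm_ring_1}"
  assumes "(L has_derivative (\<lambda>h. g \<bullet> h)) (at (cconv c x))"
  shows "((\<lambda>x'. L (cconv c x')) has_derivative (\<lambda>h. cconv (crev c) g \<bullet> h)) (at x)"
  using diff_chain_at[OF linear_imp_has_derivative[OF linear_cconv] assms]
  by (simp add: o_def inner_cconv_right)

lemma carma_gradients:
  fixes a w x y gy :: "real^'a::{finite,comm_ring_1}"
  assumes surj: "surj (of_int :: int \<Rightarrow> 'a)" and nonzero: "\<forall>k<CARD('a). cdft a k \<noteq> 0"
    and ay: "cconv a y = cconv w x" and L: "(L has_derivative (\<lambda>h. gy \<bullet> h)) (at y)"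
  shows "\<exists>gx gw ga.
           ((\<lambda>x'. L (carma_sol a w x')) has_derivative (\<lambda>h. gx \<bullet> h)) (at x) \<and>
           ((\<lambda>w'. L (carma_sol a w' x)) has_derivative (\<lambda>h. gw \<bullet> h)) (at w) \<and>
           ((\<lambda>a'. L (carma_sol a' w x)) has_derivative (\<lambda>h. ga \<bullet> h)) (at a) \<and>
           cconv (crev a) gx = cconv (crev w) gy \<and>
           - cconv (crev a) ga = cconv (crev y) gy \<and>
           cconv (crev a) gw = cconv (crev x) gy"
proof -
  have inj: "inj (cconv a)"
    using surj nonzero by (rule inj_cconv_if_cdft_nonzero)
  then obtain b where ab: "cconv a b = cdelta"
    by (rule cconv_right_inverse)
  have sol: "carma_sol a u v = cconv (cconv b u) v" for u v
    using inj by (rule carma_sol_eq) (simp add: cconv_assoc ab)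
  have y: "carma_sol a w x = y"
    using inj ay by (rule carma_sol_eq)
  have input: "((\<lambda>v'. L (carma_sol a u v')) has_derivative (\<lambda>h. cconv (crev (cconv b u)) gy \<bullet> h)) (at v)"
    if "carma_sol a u v = y" for u v
    using that L unfolding sol by (intro has_derivative_comp_cconv) simp
  have "((L \<circ> (\<lambda>a'. carma_sol a' w x)) has_derivative
      ((\<lambda>h. gy \<bullet> h) \<circ> (\<lambda>h. - cconv (cconv b y) h))) (at a)"
    using carma_sol_has_derivative_coeff[OF ab ay] by (rule diff_chain_at) (simp add: y L)
  moreover have "(\<lambda>h. gy \<bullet> h) \<circ> (\<lambda>h. - cconv (cconv b y) h) = (\<lambda>h. - cconv (crev (cconv b y)) gy \<bullet> h)"
    by (simp add: fun_eq_iff inner_cconv_right)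
  ultimately have coeff: "((\<lambda>a'. L (carma_sol a' w x)) has_derivative
      (\<lambda>h. - cconv (crev (cconv b y)) gy \<bullet> h)) (at a)"
    by (simp add: o_def)
  moreover have "((\<lambda>w'. L (carma_sol a w' x)) has_derivative
      (\<lambda>h. cconv (crev (cconv b x)) gy \<bullet> h)) (at w)"
    using input[of x w] y by (simp add: carma_sol_commute[of a _ x])
  moreover have "- cconv (crev a) (- cconv (crev (cconv b y)) gy) = cconv (crev y) gy"
    using cconv_crev_cancel[OF ab] by (simp add: linear_neg[OF linear_cconv])
  ultimately show ?thesis
    using input[OF y] cconv_crev_cancel[OF ab] by blast
qed

theorem theorem6:
  shows "(\<forall>(a::int \<Rightarrow> real) ainv w x y gy.
            a summable_on UNIV \<and> ainv summable_on UNIV \<and> w summable_on UNIV \<and>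
            x summable_on UNIV \<and> y summable_on UNIV \<and> bounded (range gy) \<and>
            zconv a ainv = zdelta \<and> zconv ainv a = zdelta \<and>
            zconv a y = zconv w x \<longrightarrow>
            (let gx = zchain_grad (\<lambda>x'. zarma_sol a w x') x gy;
                 gw = zchain_grad (\<lambda>w'. zarma_sol a w' x) w gy;
                 ga = zchain_grad (\<lambda>a'. zarma_sol a' w x) a gy
             in zconv (rev_seq a) gx = zconv (rev_seq w) gy \<and>
                (\<lambda>i. - zconv (rev_seq a) ga i) = zconv (rev_seq y) gy \<and>
                zconv (rev_seq a) gw = zconv (rev_seq x) gy))
       \<and>
         (\<forall>(a::real^('n::{finite,comm_ring_1})) w x y (L :: real^('n::{finite,comm_ring_1}) \<Rightarrow> real) gy.
            surj (of_int :: int \<Rightarrow> ('n::{finite,comm_ring_1})) \<and>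
            (\<forall>k<CARD('n::{finite,comm_ring_1}). cdft a k \<noteq> 0) \<and>
            cconv a y = cconv w x \<and>
            (L has_derivative (\<lambda>h. gy \<bullet> h)) (at y) \<longrightarrow>
            (\<exists>gx gw ga.
               ((\<lambda>x'. L (carma_sol a w x')) has_derivative (\<lambda>h. gx \<bullet> h)) (at x) \<and>
               ((\<lambda>w'. L (carma_sol a w' x)) has_derivative (\<lambda>h. gw \<bullet> h)) (at w) \<and>
               ((\<lambda>a'. L (carma_sol a' w x)) has_derivative (\<lambda>h. ga \<bullet> h)) (at a) \<and>
               cconv (crev a) gx = cconv (crev w) gy \<and>
               - cconv (crev a) ga = cconv (crev y) gy \<and>
               cconv (crev a) gw = cconv (crev x) gy))"
  apply (intro conjI allI impI)
  subgoal by (elim conjE) (simp add: Let_def zarma_gradients)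
  subgoal by (elim conjE) (rule carma_gradients)
  done

end
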